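(* There does not exist a countably additive exchangeable probability measure $P$ on $(\mathbb{R}^\infty,\mathcal B(\mathbb{R})^{\otimes\infty})$ for the coordinate sequence $Y_1,Y_2,\dots$ such that, for every $n\ge1$ and every $k\in\{0,\dots,n\}$, \[ P\big(Y_{n+1}\in I_k(Y_{1:n})\,\big|\,Y_{1:n}\big)=\frac{1}{n+1}\quad P\text{-a.s.}, \] where the conditional probability is the regular conditional distribution of $Y_{n+1}$ given $Y_{1:n}$ under $P$.
   Context: For $y_{1:n}\in\mathbb{R}^n$ with order statistics $y_{(1)}\le\cdots\le y_{(n)}$ and conventions $y_{(0)}=-\infty$, $y_{(n+1)}=+\infty$, the order-statistic cells are $I_k(y_{1:n})=(y_{(k)},y_{(k+1)}]$ for $k=0,\dots,n$. A probability measure on $\mathbb{R}^\infty$ is exchangeable if the joint law of $(Y_1,\dots,Y_n)$ is invariant under every permutation of the coordinates, for every $n$. *)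

theory Defs
  imports "HOL-Probability.Probability"
begin

text \<open>Coordinates are 0-indexed: Y_1,...,Y_n correspond to w 0,...,w (n-1), and Y_{n+1} to w n.\<close>

abbreviation R_inf :: "(nat \<Rightarrow> real) measure" where
  "R_inf \<equiv> PiM UNIV (\<lambda>_. borel)"

definition first_n :: "nat \<Rightarrow> (nat \<Rightarrow> real) \<Rightarrow> (nat \<Rightarrow> real)" where
  "first_n n w = restrict w {..<n}"

definition exchangeable :: "(nat \<Rightarrow> real) measure \<Rightarrow> bool" where
  "exchangeable P \<longleftrightarrow> (\<forall>n \<sigma>. \<sigma> permutes {..<n} \<longrightarrow>
      distr P (PiM {..<n} (\<lambda>_. borel)) (\<lambda>w. first_n n (w \<circ> \<sigma>))
    = distr P (PiM {..<n} (\<lambda>_. borel)) (\<lambda>w. first_n n w))"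

definition order_stat :: "nat \<Rightarrow> (nat \<Rightarrow> real) \<Rightarrow> nat \<Rightarrow> ereal" where
  "order_stat n w k =
     (if k = 0 then -\<infinity> else if k > n then \<infinity>
      else ereal (sort (map w [0..<n]) ! (k - 1)))"

definition cell :: "nat \<Rightarrow> (nat \<Rightarrow> real) \<Rightarrow> nat \<Rightarrow> real set" where
  "cell n w k = {x. order_stat n w k < ereal x \<and> ereal x \<le> order_stat n w (k + 1)}"

definition sigma_first :: "(nat \<Rightarrow> real) measure \<Rightarrow> nat \<Rightarrow> (nat \<Rightarrow> real) measure" where
  "sigma_first P n = vimage_algebra (space P) (first_n n) (PiM {..<n} (\<lambda>_. borel))"

definition cell_event :: "nat \<Rightarrow> nat \<Rightarrow> (nat \<Rightarrow> real) set" where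
  "cell_event n k = {w. w n \<in> cell n w k}"

end

theory Submission
  imports Defs
begin

(* With X = Y_1 and Y = Y_2 the hypothesis says P(Y <= X | X) = 1/2;
   integrating it over the whole space and over {X <= a} gives P(Y <= X) = 1/2 and
   P(X <= a, Y <= X) = P(X <= a)/2, and exchangeability gives the mirror images
   P(X <= Y) = 1/2 and P(Y <= a, X <= Y) = P(X <= a)/2. So ties are null, the two events
   {X <= a, Y <= X} and {Y <= a, X <= Y} are a.s. disjoint with union {X <= a, Y <= a},
   and hence P(X <= a < Y) = 0 for every a. Letting a range over the rationals gives
   P(X < Y) = 0, contradicting P(X < Y) = 1 - P(Y <= X) = 1/2. *)

context prob_space
begin

lemma prob_less_eq_0_if_cuts_null:
  fixes X Y :: "'a \<Rightarrow> real"
  assumes [measurable]: "X \<in> borel_measurable M" "Y \<in> borel_measurable M"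
    and cuts: "\<And>a. prob {w \<in> space M. X w \<le> a \<and> a < Y w} = 0"
  shows "prob {w \<in> space M. X w < Y w} = 0"
proof -
  let ?cut = "\<lambda>a. {w \<in> space M. X w \<le> a \<and> a < Y w}"
  have "?cut a \<in> null_sets M" for a
    by (rule null_setsI) (simp add: emeasure_eq_measure cuts, measurable)
  then have "(\<Union>q\<in>\<rat>. ?cut q) \<in> null_sets M"
    by (intro null_sets_UN' countable_rat)
  moreover have "{w \<in> space M. X w < Y w} \<subseteq> (\<Union>q\<in>\<rat>. ?cut q)"
  proof
    fix w assume "w \<in> {w \<in> space M. X w < Y w}"
    moreover from this obtain q where "q \<in> \<rat>" "X w < q" "q < Y w"
      using Rats_dense_in_real by blast
    ultimately show "w \<in> (\<Union>q\<in>\<rat>. ?cut q)" by (blast intro: less_imp_le)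
  qed
  moreover have "{w \<in> space M. X w < Y w} \<in> sets M"
    by measurable
  ultimately have "{w \<in> space M. X w < Y w} \<in> null_sets M"
    by (blast intro: null_sets_subset)
  then show ?thesis
    by (rule measure_eq_0_null_sets)
qed

lemma prob_swap_if_exchangeable_pair:
  fixes X Y :: "'a \<Rightarrow> real"
  assumes [measurable]: "X \<in> borel_measurable M" "Y \<in> borel_measurable M"
    and swap: "distr M (borel \<Otimes>\<^sub>M borel) (\<lambda>w. (X w, Y w)) = distr M (borel \<Otimes>\<^sub>M borel) (\<lambda>w. (Y w, X w))"
    and [measurable]: "Measurable.pred (borel \<Otimes>\<^sub>M borel) Q"
  shows "prob {w \<in> space M. Q (X w, Y w)} = prob {w \<in> space M. Q (Y w, X w)}"
proof -
  let ?S = "{p \<in> space (borel \<Otimes>\<^sub>M borel). Q p}"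
  have S: "{p. Q p} \<in> sets (borel \<Otimes>\<^sub>M borel)"
    using \<open>Measurable.pred _ Q\<close> by (simp add: pred_def space_pair_measure)
  have "prob {w \<in> space M. Q (X w, Y w)} = measure (distr M (borel \<Otimes>\<^sub>M borel) (\<lambda>w. (X w, Y w))) ?S"
    by (subst measure_distr) (auto simp: space_pair_measure S intro!: arg_cong[where f = prob])
  also have "\<dots> = measure (distr M (borel \<Otimes>\<^sub>M borel) (\<lambda>w. (Y w, X w))) ?S"
    by (simp only: swap)
  also have "\<dots> = prob {w \<in> space M. Q (Y w, X w)}"
    by (subst measure_distr) (auto simp: space_pair_measure S intro!: arg_cong[where f = prob])
  finally show ?thesis .
qed

lemma prob_tie_eq_0_if_exchangeable_pair_half:
  fixes X Y :: "'a \<Rightarrow> real"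
  assumes [measurable]: "X \<in> borel_measurable M" "Y \<in> borel_measurable M"
    and swap: "distr M (borel \<Otimes>\<^sub>M borel) (\<lambda>w. (X w, Y w)) = distr M (borel \<Otimes>\<^sub>M borel) (\<lambda>w. (Y w, X w))"
    and half: "prob {w \<in> space M. Y w \<le> X w} = 1 / 2"
  shows "prob {w \<in> space M. X w = Y w} = 0"
proof -
  let ?below = "{w \<in> space M. Y w \<le> X w}" and ?above = "{w \<in> space M. X w \<le> Y w}"
  have above: "prob ?above = 1 / 2"
    using half prob_swap_if_exchangeable_pair[OF _ _ swap, of "\<lambda>p. fst p \<le> snd p"] by simp
  have "prob (?below \<union> ?above) = prob ?below + prob ?above - prob (?below \<inter> ?above)"
    by (intro measure_Un3) (auto simp: fmeasurable_def emeasure_eq_measure)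
  moreover have "?below \<union> ?above = space M" and "?below \<inter> ?above = {w \<in> space M. X w = Y w}"
    by auto
  ultimately show ?thesis
    using half above prob_space by simp
qed

lemma prob_cut_eq_0_if_exchangeable_pair_half:
  fixes X Y :: "'a \<Rightarrow> real"
  assumes [measurable]: "X \<in> borel_measurable M" "Y \<in> borel_measurable M"
    and swap: "distr M (borel \<Otimes>\<^sub>M borel) (\<lambda>w. (X w, Y w)) = distr M (borel \<Otimes>\<^sub>M borel) (\<lambda>w. (Y w, X w))"
    and tie: "prob {w \<in> space M. X w = Y w} = 0"
    and half: "prob {w \<in> space M. X w \<le> a \<and> Y w \<le> X w} = prob {w \<in> space M. X w \<le> a} / 2"
  shows "prob {w \<in> space M. X w \<le> a \<and> a < Y w} = 0"
proof -
  let ?B1 = "{w \<in> space M. X w \<le> a \<and> Y w \<le> X w}" and ?B2 = "{w \<in> space M. Y w \<le> a \<and> X w \<le> Y w}"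
  let ?both = "{w \<in> space M. X w \<le> a \<and> Y w \<le> a}" and ?cut = "{w \<in> space M. X w \<le> a \<and> a < Y w}"
  have B2: "prob ?B2 = prob ?B1"
    using prob_swap_if_exchangeable_pair[OF _ _ swap, of "\<lambda>p. snd p \<le> a \<and> fst p \<le> snd p"] by simp
  have "prob (?B1 \<inter> ?B2) \<le> prob {w \<in> space M. X w = Y w}"
    by (intro finite_measure_mono) auto
  then have B12: "prob (?B1 \<inter> ?B2) = 0"
    using tie measure_nonneg[of M "?B1 \<inter> ?B2"] by linarith
  have "prob (?B1 \<union> ?B2) = prob ?B1 + prob ?B2 - prob (?B1 \<inter> ?B2)"
    by (intro measure_Un3) (auto simp: fmeasurable_def emeasure_eq_measure)
  moreover have "?B1 \<union> ?B2 = ?both"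
    by auto
  ultimately have both: "prob ?both = prob ?B1 + prob ?B2 - prob (?B1 \<inter> ?B2)"
    by simp
  have "prob (?both \<union> ?cut) = prob ?both + prob ?cut"
    by (rule finite_measure_Union) (measurable, measurable, auto)
  moreover have "?both \<union> ?cut = {w \<in> space M. X w \<le> a}"
    by auto
  ultimately have "prob {w \<in> space M. X w \<le> a} = prob ?both + prob ?cut"
    by simp
  then show ?thesis
    using half B2 B12 both by linarith
qed

lemma not_exchangeable_pair_with_half_below:
  fixes X Y :: "'a \<Rightarrow> real"
  assumes [measurable]: "X \<in> borel_measurable M" "Y \<in> borel_measurable M"
    and swap: "distr M (borel \<Otimes>\<^sub>M borel) (\<lambda>w. (X w, Y w)) = distr M (borel \<Otimes>\<^sub>M borel) (\<lambda>w. (Y w, X w))"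
    and half: "prob {w \<in> space M. Y w \<le> X w} = 1 / 2"
    and half_below: "\<And>a. prob {w \<in> space M. X w \<le> a \<and> Y w \<le> X w} = prob {w \<in> space M. X w \<le> a} / 2"
  shows False
proof -
  have "prob {w \<in> space M. X w = Y w} = 0"
    using prob_tie_eq_0_if_exchangeable_pair_half[OF _ _ swap half] by simp
  then have "prob {w \<in> space M. X w \<le> a \<and> a < Y w} = 0" for a
    using prob_cut_eq_0_if_exchangeable_pair_half[OF _ _ swap _ half_below] by simp
  then have "prob {w \<in> space M. X w < Y w} = 0"
    by (intro prob_less_eq_0_if_cuts_null) auto
  moreover have "prob {w \<in> space M. X w < Y w} = 1 - prob {w \<in> space M. Y w \<le> X w}"
  proof -
    have "{w \<in> space M. X w < Y w} = space M - {w \<in> space M. Y w \<le> X w}"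
      by auto
    then show ?thesis
      by (simp add: prob_compl)
  qed
  ultimately show False
    using half by simp
qed

end

lemma (in sigma_finite_subalgebra) measure_Int_eq_if_real_cond_exp_const:
  assumes E: "E \<in> sets M" "emeasure M E < \<infinity>" and A: "A \<in> sets F" "emeasure M A < \<infinity>"
    and cond: "AE x in M. real_cond_exp M F (indicator E) x = c"
  shows "measure M (A \<inter> E) = c * measure M A"
proof -
  have A_M: "A \<in> sets M"
    using A(1) subalg by (auto simp: subalgebra_def)
  have "measure M (A \<inter> E) = (\<integral>x\<in>A. indicator E x \<partial>M)"
    using E(1) sets.sets_into_space
    by (simp add: set_lebesgue_integral_def indicator_inter_arith[symmetric] Int_absorb2 Int_assoc)
  also have "\<dots> = (\<integral>x\<in>A. real_cond_exp M F (indicator E) x \<partial>M)"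
    using E A(1) by (intro real_cond_exp_intA) (simp_all add: integrable_indicator_iff)
  also have "\<dots> = (\<integral>x\<in>A. c \<partial>M)"
    unfolding set_lebesgue_integral_def using cond A_M by (intro integral_cong_AE) auto
  also have "\<dots> = c * measure M A"
    using A_M A(2) by (simp add: set_integral_const)
  finally show ?thesis .
qed

lemma measurable_first_n: "first_n n \<in> R_inf \<rightarrow>\<^sub>M PiM {..<n} (\<lambda>_. borel)"
  unfolding first_n_def by (rule measurable_restrict_subset) auto

lemma subalgebra_sigma_first:
  assumes "sets P = sets R_inf"
  shows "subalgebra P (sigma_first P n)"
proof -
  have "first_n n \<in> P \<rightarrow>\<^sub>M PiM {..<n} (\<lambda>_. borel)"
    using measurable_first_n measurable_cong_sets[OF assms refl] by blast
  then show ?thesis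
    unfolding subalgebra_def sigma_first_def by (simp add: sets_image_in_sets)
qed

lemma measurable_coordinate_sigma_first:
  assumes "i < n"
  shows "(\<lambda>w. w i) \<in> borel_measurable (sigma_first P n)"
proof -
  have "first_n n \<in> sigma_first P n \<rightarrow>\<^sub>M PiM {..<n} (\<lambda>_. borel)"
    unfolding sigma_first_def by (rule measurable_vimage_algebra1) (auto simp: first_n_def space_PiM)
  then have "(\<lambda>w. first_n n w i) \<in> borel_measurable (sigma_first P n)"
    by (rule measurable_compose[OF _ measurable_component_singleton]) (use assms in simp)
  then show ?thesis
    using assms by (simp add: first_n_def)
qed

lemma coordinate_le_in_sigma_first:
  assumes "sets P = sets R_inf" and "i < n"
  shows "{w. w i \<le> a} \<in> sets (sigma_first P n)"
proof -
  have [measurable]: "(\<lambda>w. w i) \<in> borel_measurable (sigma_first P n)"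
    using assms(2) by (rule measurable_coordinate_sigma_first)
  have "{w \<in> space (sigma_first P n). w i \<le> a} \<in> sets (sigma_first P n)"
    by measurable
  moreover have "space (sigma_first P n) = UNIV"
    using sets_eq_imp_space_eq[OF assms(1)] by (simp add: sigma_first_def space_PiM)
  ultimately show ?thesis
    by simp
qed

lemma measure_Int_eq_if_cond_exp_sigma_first_const:
  assumes "prob_space P" and sets_P: "sets P = sets R_inf" and "E \<in> sets P"
    and "AE w in P. real_cond_exp P (sigma_first P n) (indicator E) w = c"
    and "A \<in> sets (sigma_first P n)"
  shows "measure P (A \<inter> E) = c * measure P A"
proof -
  interpret prob_space P by fact
  interpret finite_measure_subalgebra P "sigma_first P n"
    using subalgebra_sigma_first[OF sets_P] by unfold_locales
  show ?thesis
    using assms by (intro measure_Int_eq_if_real_cond_exp_const) (simp_all add: emeasure_eq_measure)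
qed

lemma exchangeable_distr_pair_swap:
  assumes exch: "exchangeable P" and sets_P: "sets P = sets R_inf"
  shows "distr P (borel \<Otimes>\<^sub>M borel) (\<lambda>w. (w i, w j)) = distr P (borel \<Otimes>\<^sub>M borel) (\<lambda>w. (w j, w i))"
proof -
  define n where "n = Suc (max i j)"
  define N where "N = PiM {..<n} (\<lambda>_. borel :: real measure)"
  let ?\<sigma> = "Transposition.transpose i j"
  have "?\<sigma> permutes {..<n}"
    by (rule permutes_swap_id) (auto simp: n_def)
  then have law: "distr P N (\<lambda>w. first_n n (w \<circ> ?\<sigma>)) = distr P N (first_n n)"
    using exch unfolding exchangeable_def N_def by blast
  have pair: "(\<lambda>y. (y i, y j)) \<in> N \<rightarrow>\<^sub>M borel \<Otimes>\<^sub>M borel"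
    unfolding N_def n_def by measurable
  have first: "first_n n \<in> P \<rightarrow>\<^sub>M N"
    using measurable_first_n measurable_cong_sets[OF sets_P refl] unfolding N_def by blast
  have permuted: "(\<lambda>w. first_n n (w \<circ> ?\<sigma>)) \<in> P \<rightarrow>\<^sub>M N"
    unfolding measurable_cong_sets[OF sets_P refl] N_def first_n_def comp_def
    by (intro measurable_restrict measurable_component_singleton) auto
  have "distr P (borel \<Otimes>\<^sub>M borel) (\<lambda>w. (w i, w j))
      = distr (distr P N (first_n n)) (borel \<Otimes>\<^sub>M borel) (\<lambda>y. (y i, y j))"
    using distr_distr[OF pair first] by (simp add: comp_def first_n_def n_def less_Suc_eq_le)
  also have "\<dots> = distr (distr P N (\<lambda>w. first_n n (w \<circ> ?\<sigma>))) (borel \<Otimes>\<^sub>M borel) (\<lambda>y. (y i, y j))"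
    by (simp only: law)
  also have "\<dots> = distr P (borel \<Otimes>\<^sub>M borel) (\<lambda>w. (w j, w i))"
    using distr_distr[OF pair permuted] by (simp add: comp_def first_n_def n_def less_Suc_eq_le)
  finally show ?thesis .
qed

lemma cell_event_1_0: "cell_event 1 0 = {w. w 1 \<le> w 0}"
  by (auto simp: cell_event_def cell_def order_stat_def)

theorem mainTheorem3:
  shows "\<not> (\<exists>P :: (nat \<Rightarrow> real) measure.
            prob_space P \<and> sets P = sets R_inf \<and> exchangeable P \<and>
            (\<forall>n\<ge>1. \<forall>k\<le>n.
               AE w in P. real_cond_exp P (sigma_first P n) (indicator (cell_event n k)) w
                          = 1 / real (n + 1)))"
proof
  assume "\<exists>P :: (nat \<Rightarrow> real) measure.
            prob_space P \<and> sets P = sets R_inf \<and> exchangeable P \<and>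
            (\<forall>n\<ge>1. \<forall>k\<le>n.
               AE w in P. real_cond_exp P (sigma_first P n) (indicator (cell_event n k)) w
                          = 1 / real (n + 1))"
  then obtain P where P: "prob_space P" and sets_P: "sets P = sets R_inf" and exch: "exchangeable P"
    and hyp: "\<forall>n\<ge>1. \<forall>k\<le>n. AE w in P. real_cond_exp P (sigma_first P n) (indicator (cell_event n k)) w
                          = 1 / real (n + 1)"
    by blast
  interpret prob_space P by (fact P)
  have space_P: "space P = UNIV"
    using sets_eq_imp_space_eq[OF sets_P] by (simp add: space_PiM)
  have [measurable]: "(\<lambda>w. w i) \<in> borel_measurable P" for i
    unfolding measurable_cong_sets[OF sets_P refl] by measurable
  have "AE w in P. real_cond_exp P (sigma_first P 1) (indicator {w \<in> space P. w 1 \<le> w 0}) w = 1 / 2"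
    using hyp[rule_format, of 1 0] unfolding cell_event_1_0 by (simp add: space_P)
  from measure_Int_eq_if_cond_exp_sigma_first_const[OF P sets_P _ this]
  have half: "prob (A \<inter> {w \<in> space P. w 1 \<le> w 0}) = prob A / 2" if "A \<in> sets (sigma_first P 1)" for A
    using that by simp
  show False
  proof (rule not_exchangeable_pair_with_half_below)
    show "distr P (borel \<Otimes>\<^sub>M borel) (\<lambda>w. (w 0, w 1)) = distr P (borel \<Otimes>\<^sub>M borel) (\<lambda>w. (w 1, w 0))"
      by (rule exchangeable_distr_pair_swap[OF exch sets_P])
    show "prob {w \<in> space P. w 1 \<le> w 0} = 1 / 2"
      using half[OF sets.top] prob_space by (simp add: sigma_first_def)
    show "prob {w \<in> space P. w 0 \<le> a \<and> w 1 \<le> w 0} = prob {w \<in> space P. w 0 \<le> a} / 2" for a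
      using half[OF coordinate_le_in_sigma_first[OF sets_P, of 0 1 a]] by (simp add: space_P Int_def)
  qed simp_all
qed

end
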